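(* Let $\kappa$ be a regular infinite cardinal and let $B$ be an infinite Boolean algebra with the $\kappa$-FN. Then $|B|\le \mathrm{Ind}(B)^{<\kappa}$. In particular, every infinite Boolean algebra $B$ with the weak Freese–Nation property satisfies $|B|\le\mathrm{Ind}(B)^{\aleph_0}$.
   Context: For an infinite cardinal $\kappa$, a Boolean algebra $B$ has the $\kappa$-Freese–Nation property ($\kappa$-FN) if there is a map $f:B\to[B]^{<\kappa}$ such that for all $a,b\in B$ with $a\le b$ there is $c\in f(a)\cap f(b)$ with $a\le c\le b$; the weak Freese–Nation property is the $\aleph_1$-FN. $\mathrm{Ind}(B)$ is the supremum of the cardinalities of independent subsets of $B$, where $Y\subseteq B$ is independent if every elementary product $y_0^{\epsilon_0}\cdots y_{n-1}^{\epsilon_{n-1}}$ of finitely many distinct $y_i\in Y$ ($y^1=y$, $y^0=-y$) is nonzero. *)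

theory Defs
  imports Main
begin

unbundle cardinal_syntax

text \<open>The supremum of the cardinals |A i| (i in I), represented by a subset of the
  disjoint union Sigma I A (every cardinal below that union is realised there):
  a subset that is an upper bound of all |A i| and is below every other such
  upper bound.\<close>

definition csup :: "'i set \<Rightarrow> ('i \<Rightarrow> 'b set) \<Rightarrow> ('i \<times> 'b) set" where
  "csup I A = (SOME T. T \<subseteq> Sigma I A \<and> (\<forall>i\<in>I. |A i| \<le>o |T| ) \<and>
      (\<forall>T'. T' \<subseteq> Sigma I A \<and> (\<forall>i\<in>I. |A i| \<le>o |T'| ) \<longrightarrow> |T| \<le>o |T'| ))"

definition el_prod :: "'a::boolean_algebra set \<Rightarrow> ('a \<Rightarrow> bool) \<Rightarrow> 'a" where
  "el_prod F eps = Finite_Set.fold (\<lambda>y acc. inf (if eps y then y else - y) acc) top F"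

definition independent :: "'a::boolean_algebra set \<Rightarrow> bool" where
  "independent Y \<longleftrightarrow> (\<forall>F eps. finite F \<and> F \<subseteq> Y \<longrightarrow> el_prod F eps \<noteq> bot)"

text \<open>Ind(B) for B = UNIV :: 'a set, as a set whose cardinality is the supremum
  of the cardinalities of independent subsets.\<close>
definition Ind_set :: "'a::boolean_algebra itself \<Rightarrow> ('a set \<times> 'a) set" where
  "Ind_set _ = csup {Y :: 'a set. independent Y} (\<lambda>Y. Y)"

text \<open>lambda^{<kappa} = sup of lambda^mu over cardinals mu < kappa, where
  lambda = |L| and mu ranges over the cardinals of subsets of Field kappa.\<close>
definition cpow_less :: "'b set \<Rightarrow> 'k rel \<Rightarrow> ('k set \<times> ('k \<Rightarrow> 'b)) set" where
  "cpow_less L \<kappa> = csup {M. M \<subseteq> Field \<kappa> \<and> |M| <o \<kappa>} (\<lambda>M. Func M L)"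

definition kappa_FN :: "'k rel \<Rightarrow> 'a::boolean_algebra itself \<Rightarrow> bool" where
  "kappa_FN \<kappa> _ \<longleftrightarrow> (\<exists>f :: 'a \<Rightarrow> 'a set. (\<forall>a. |f a| <o \<kappa>) \<and>
      (\<forall>a b. a \<le> b \<longrightarrow> (\<exists>c \<in> f a \<inter> f b. a \<le> c \<and> c \<le> b)))"

end

(* Let f witness the kappa-FN property of B and let L be a set of size Ind(B).
   For D, U in B, say that y fills the gap (D, U) over S if D <= y <= U, y is not in the
   subalgebra generated by S, D and U, and every element of that subalgebra below (above)
   y lies below some element of D (above some element of U).  A gap family is a set of
   such y, each filling the gap over its own set S_y, such that every finite subset F has
   a member y with F - {y} contained in S_y.  Peeling off these members shows that all
   elementary products of F avoid the ideal generated by D and the complements of U, so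
   a gap family is independent and has at most |L| elements.
   A recursion of length kappa yields a set A of size at most |L|^{<kappa} that is a
   subalgebra, is closed under f, and contains the domain of a maximal gap family for all
   D, U contained in A of size less than kappa.  If b were not in A, then
   D = {c \<in> f b \<inter> A. c <= b} and U = {c \<in> f b \<inter> A. b <= c} would be such sets, and the
   Freese-Nation property makes b fill the gap (D, U) over the domain of that family,
   contradicting maximality.  Hence A = B.  For kappa = aleph_1, |L|^{<kappa} = |L|^{aleph_0}. *)

theory Submission
  imports Defs
begin

section \<open>Elementary products and generated subalgebras\<close>

definition signed :: "('a::boolean_algebra \<Rightarrow> bool) \<Rightarrow> 'a \<Rightarrow> 'a" where
  "signed eps y = (if eps y then y else - y)"

lemma el_prod_empty [simp]: "el_prod {} eps = top"
  by (simp add: el_prod_def)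

lemma el_prod_insert:
  assumes "finite F" "y \<notin> F"
  shows "el_prod (insert y F) eps = inf (signed eps y) (el_prod F eps)"
proof -
  interpret comp_fun_commute "\<lambda>y acc. inf (if eps y then y else - y) acc"
    by standard (auto simp: fun_eq_iff inf_left_commute)
  show ?thesis using assms by (simp add: el_prod_def signed_def)
qed

lemma le_el_prod_iff:
  assumes "finite F"
  shows "x \<le> el_prod F eps \<longleftrightarrow> (\<forall>y\<in>F. x \<le> signed eps y)"
  using assms by (induction F rule: finite_induct) (auto simp: el_prod_insert)

inductive_set gen_subalgebra :: "'a::boolean_algebra set \<Rightarrow> 'a set" for X where
  base: "x \<in> X \<Longrightarrow> x \<in> gen_subalgebra X"
| top: "top \<in> gen_subalgebra X"
| inf: "x \<in> gen_subalgebra X \<Longrightarrow> y \<in> gen_subalgebra X \<Longrightarrow> inf x y \<in> gen_subalgebra X"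
| compl: "x \<in> gen_subalgebra X \<Longrightarrow> - x \<in> gen_subalgebra X"

lemma gen_subalgebra_sup:
  assumes "x \<in> gen_subalgebra X" "y \<in> gen_subalgebra X"
  shows "sup x y \<in> gen_subalgebra X"
proof -
  have "- inf (- x) (- y) \<in> gen_subalgebra X"
    using assms by (intro gen_subalgebra.compl gen_subalgebra.inf)
  then show ?thesis by simp
qed

lemma gen_subalgebra_least:
  assumes "X \<subseteq> A" "top \<in> A" "\<And>x y. x \<in> A \<Longrightarrow> y \<in> A \<Longrightarrow> inf x y \<in> A"
    "\<And>x. x \<in> A \<Longrightarrow> - x \<in> A"
  shows "gen_subalgebra X \<subseteq> A"
proof
  fix x assume "x \<in> gen_subalgebra X"
  then show "x \<in> A" by (induction rule: gen_subalgebra.induct) (use assms in auto)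
qed

lemma gen_subalgebra_mono: "X \<subseteq> Y \<Longrightarrow> gen_subalgebra X \<subseteq> gen_subalgebra Y"
  by (rule gen_subalgebra_least) (auto intro: gen_subalgebra.intros)

lemma el_prod_in_gen_subalgebra:
  assumes "finite F" "F \<subseteq> X"
  shows "el_prod F eps \<in> gen_subalgebra X"
  using assms by (induction F rule: finite_induct)
    (auto simp: el_prod_insert signed_def intro: gen_subalgebra.intros)

section \<open>Gap fillers and gap families\<close>

inductive_set finite_joins :: "'a::boolean_algebra set \<Rightarrow> 'a set" for D where
  bot: "bot \<in> finite_joins D"
| sup: "d \<in> D \<Longrightarrow> j \<in> finite_joins D \<Longrightarrow> sup d j \<in> finite_joins D"

inductive_set finite_meets :: "'a::boolean_algebra set \<Rightarrow> 'a set" for U where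
  top: "top \<in> finite_meets U"
| inf: "u \<in> U \<Longrightarrow> m \<in> finite_meets U \<Longrightarrow> inf u m \<in> finite_meets U"

lemma finite_joins_le: "j \<in> finite_joins D \<Longrightarrow> (\<And>d. d \<in> D \<Longrightarrow> d \<le> y) \<Longrightarrow> j \<le> y"
  by (induction rule: finite_joins.induct) auto

lemma finite_meets_ge: "m \<in> finite_meets U \<Longrightarrow> (\<And>u. u \<in> U \<Longrightarrow> y \<le> u) \<Longrightarrow> y \<le> m"
  by (induction rule: finite_meets.induct) auto

lemma finite_joins_in_gen_subalgebra:
  "j \<in> finite_joins D \<Longrightarrow> D \<subseteq> X \<Longrightarrow> j \<in> gen_subalgebra X"
proof (induction rule: finite_joins.induct)
  case bot
  have "- top \<in> gen_subalgebra X" by (intro gen_subalgebra.intros)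
  then show ?case by simp
next
  case (sup d j)
  then show ?case by (auto intro: gen_subalgebra_sup gen_subalgebra.base)
qed

lemma finite_meets_in_gen_subalgebra:
  "m \<in> finite_meets U \<Longrightarrow> U \<subseteq> X \<Longrightarrow> m \<in> gen_subalgebra X"
  by (induction rule: finite_meets.induct) (auto intro: gen_subalgebra.intros)

definition fills_gap :: "'a::boolean_algebra set \<Rightarrow> 'a set \<Rightarrow> 'a set \<Rightarrow> 'a \<Rightarrow> bool" where
  "fills_gap D U S y \<longleftrightarrow> (\<forall>d\<in>D. d \<le> y) \<and> (\<forall>u\<in>U. y \<le> u) \<and> y \<notin> gen_subalgebra (S \<union> D \<union> U) \<and>
     (\<forall>a\<in>gen_subalgebra (S \<union> D \<union> U).
        (a \<le> y \<longrightarrow> (\<exists>d\<in>D. a \<le> d)) \<and> (y \<le> a \<longrightarrow> (\<exists>u\<in>U. u \<le> a)))"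

lemma fills_gapD:
  assumes "fills_gap D U S y"
  shows "\<And>d. d \<in> D \<Longrightarrow> d \<le> y" and "\<And>u. u \<in> U \<Longrightarrow> y \<le> u"
    and "y \<notin> gen_subalgebra (S \<union> D \<union> U)"
    and "\<And>a. a \<in> gen_subalgebra (S \<union> D \<union> U) \<Longrightarrow> a \<le> y \<Longrightarrow> \<exists>d\<in>D. a \<le> d"
    and "\<And>a. a \<in> gen_subalgebra (S \<union> D \<union> U) \<Longrightarrow> y \<le> a \<Longrightarrow> \<exists>u\<in>U. u \<le> a"
  using assms unfolding fills_gap_def by blast+

(* p is outside the ideal generated by D and the complements of the elements of U. *)
definition avoids_cut :: "'a::boolean_algebra set \<Rightarrow> 'a set \<Rightarrow> 'a \<Rightarrow> bool" where
  "avoids_cut D U p \<longleftrightarrow> (\<forall>j\<in>finite_joins D. \<forall>m\<in>finite_meets U. \<not> inf p m \<le> j)"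

lemma avoids_cut_ne_bot: "avoids_cut D U p \<Longrightarrow> p \<noteq> bot"
  unfolding avoids_cut_def using finite_joins.bot finite_meets.top by fastforce

lemma fills_gap_avoids_cut_top:
  assumes "fills_gap D U S y"
  shows "avoids_cut D U top"
  unfolding avoids_cut_def
proof (intro ballI notI)
  fix j m assume j: "j \<in> finite_joins D" and m: "m \<in> finite_meets U" and "inf top m \<le> j"
  have "y \<le> m" using m fills_gapD(2)[OF assms] by (rule finite_meets_ge)
  moreover have "m \<in> gen_subalgebra (S \<union> D \<union> U)" using m by (rule finite_meets_in_gen_subalgebra) auto
  ultimately obtain u where u: "u \<in> U" "u \<le> m" using fills_gapD(5)[OF assms] by blast
  have "u \<le> y"
    using u(2) \<open>inf top m \<le> j\<close> finite_joins_le[OF j fills_gapD(1)[OF assms]] by simp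
  then have "y = u" using fills_gapD(2)[OF assms u(1)] by simp
  then show False using u(1) fills_gapD(3)[OF assms] by (auto intro: gen_subalgebra.base)
qed

lemma fills_gap_avoids_cut_inf:
  assumes gap: "fills_gap D U S y" and p: "p \<in> gen_subalgebra (S \<union> D \<union> U)"
    and avoids: "avoids_cut D U p"
  shows "avoids_cut D U (inf (signed eps y) p)"
  unfolding avoids_cut_def
proof (intro ballI notI)
  fix j m assume j: "j \<in> finite_joins D" and m: "m \<in> finite_meets U"
    and le: "inf (inf (signed eps y) p) m \<le> j"
  have jm: "j \<in> gen_subalgebra (S \<union> D \<union> U)" "m \<in> gen_subalgebra (S \<union> D \<union> U)"
    by (auto intro: finite_joins_in_gen_subalgebra[OF j] finite_meets_in_gen_subalgebra[OF m])
  show False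
  proof (cases "eps y")
    case True
    then have "inf y (inf p m) \<le> j" using le by (simp add: signed_def inf_assoc)
    then have "y \<le> sup (- inf p m) j" by (simp only: shunt1)
    moreover have "sup (- inf p m) j \<in> gen_subalgebra (S \<union> D \<union> U)"
      using p jm by (intro gen_subalgebra_sup gen_subalgebra.compl gen_subalgebra.inf)
    ultimately obtain u where u: "u \<in> U" "u \<le> sup (- inf p m) j"
      using fills_gapD(5)[OF gap] by blast
    then have "inf u (inf p m) \<le> j" by (simp only: shunt1)
    then have "inf p (inf u m) \<le> j" by (simp only: inf_left_commute)
    moreover have "inf u m \<in> finite_meets U" using u(1) m by (rule finite_meets.inf)
    ultimately show False using avoids j unfolding avoids_cut_def by blast
  next
    case False
    then have "inf (inf p m) (- y) \<le> j" using le by (simp add: signed_def inf_commute inf_left_commute)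
    then have "inf (inf p m) (- j) \<le> y" by (simp only: shunt2 sup_commute)
    moreover have "inf (inf p m) (- j) \<in> gen_subalgebra (S \<union> D \<union> U)"
      using p jm by (intro gen_subalgebra.compl gen_subalgebra.inf)
    ultimately obtain d where d: "d \<in> D" "inf (inf p m) (- j) \<le> d"
      using fills_gapD(4)[OF gap] by blast
    then have "inf p m \<le> sup d j" by (simp only: shunt2 sup_commute)
    moreover have "sup d j \<in> finite_joins D" using d(1) j by (rule finite_joins.sup)
    ultimately show False using avoids m unfolding avoids_cut_def by blast
  qed
qed

definition gap_families :: "'a::boolean_algebra set \<Rightarrow> 'a set \<Rightarrow> ('a \<times> 'a set) set set" where
  "gap_families D U = {\<Phi>. (\<forall>y S. (y, S) \<in> \<Phi> \<longrightarrow> fills_gap D U S y) \<and>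
     (\<forall>F. finite F \<longrightarrow> F \<noteq> {} \<longrightarrow> F \<subseteq> Domain \<Phi> \<longrightarrow> (\<exists>y S. (y, S) \<in> \<Phi> \<and> y \<in> F \<and> F - {y} \<subseteq> S))}"

lemma gap_familiesI:
  assumes "\<And>y S. (y, S) \<in> \<Phi> \<Longrightarrow> fills_gap D U S y"
    and "\<And>F. finite F \<Longrightarrow> F \<noteq> {} \<Longrightarrow> F \<subseteq> Domain \<Phi> \<Longrightarrow> \<exists>y S. (y, S) \<in> \<Phi> \<and> y \<in> F \<and> F - {y} \<subseteq> S"
  shows "\<Phi> \<in> gap_families D U"
  using assms unfolding gap_families_def by blast

lemma gap_familiesD:
  assumes "\<Phi> \<in> gap_families D U"
  shows "\<And>y S. (y, S) \<in> \<Phi> \<Longrightarrow> fills_gap D U S y"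
    and "\<And>F. finite F \<Longrightarrow> F \<noteq> {} \<Longrightarrow> F \<subseteq> Domain \<Phi> \<Longrightarrow> \<exists>y S. (y, S) \<in> \<Phi> \<and> y \<in> F \<and> F - {y} \<subseteq> S"
  using assms unfolding gap_families_def by blast+

lemma el_prod_avoids_cut:
  assumes \<Phi>: "\<Phi> \<in> gap_families D U" and ne: "Domain \<Phi> \<noteq> {}"
  shows "finite F \<Longrightarrow> F \<subseteq> Domain \<Phi> \<Longrightarrow> avoids_cut D U (el_prod F eps)"
proof (induction "card F" arbitrary: F rule: less_induct)
  case less
  show ?case
  proof (cases "F = {}")
    case True
    obtain y S where "(y, S) \<in> \<Phi>" using ne by auto
    then have "fills_gap D U S y" by (rule gap_familiesD(1)[OF \<Phi>])
    then show ?thesis using True by (simp add: fills_gap_avoids_cut_top)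
  next
    case False
    then obtain y S where yS: "(y, S) \<in> \<Phi>" "y \<in> F" "F - {y} \<subseteq> S"
      using gap_familiesD(2)[OF \<Phi> less.prems(1) False less.prems(2)] by blast
    have gap: "fills_gap D U S y" by (rule gap_familiesD(1)[OF \<Phi> yS(1)])
    have "el_prod F eps = inf (signed eps y) (el_prod (F - {y}) eps)"
      using el_prod_insert[of "F - {y}" y eps] less.prems(1) yS(2) by (simp add: insert_absorb)
    moreover have "el_prod (F - {y}) eps \<in> gen_subalgebra (S \<union> D \<union> U)"
      using less.prems(1) yS(3) by (intro el_prod_in_gen_subalgebra) auto
    moreover have "avoids_cut D U (el_prod (F - {y}) eps)"
      using less.prems card_Diff1_less[OF less.prems(1) yS(2)] by (intro less.hyps) auto
    ultimately show ?thesis by (simp add: fills_gap_avoids_cut_inf[OF gap])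
  qed
qed

lemma independent_Domain_gap_family:
  fixes D U :: "'a::boolean_algebra set"
  assumes "\<Phi> \<in> gap_families D U" "top \<noteq> (bot :: 'a)"
  shows "independent (Domain \<Phi>)"
proof (cases "Domain \<Phi> = {}")
  case True
  then show ?thesis using assms(2) by (simp add: independent_def)
next
  case False
  show ?thesis
    unfolding independent_def
  proof (intro allI impI)
    fix F eps assume "finite F \<and> F \<subseteq> Domain \<Phi>"
    then have "avoids_cut D U (el_prod F eps)" using el_prod_avoids_cut[OF assms(1) False] by blast
    then show "el_prod F eps \<noteq> bot" by (rule avoids_cut_ne_bot)
  qed
qed

lemma gap_families_chain_Union:
  assumes "C \<in> chains (gap_families D U)"
  shows "\<Union>C \<in> gap_families D U"
proof (rule gap_familiesI)
  have C: "C \<subseteq> gap_families D U" and chain: "chain\<^sub>\<subseteq> C"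
    using assms unfolding chains_def by auto
  then show "fills_gap D U S y" if "(y, S) \<in> \<Union>C" for y S
    using that gap_familiesD(1) by blast
  fix F assume F: "finite F" "F \<noteq> {}" "F \<subseteq> Domain (\<Union>C)"
  have chain': "chain\<^sub>\<subseteq> (Domain ` C)"
    unfolding chain_subset_def
  proof (intro ballI)
    fix A B assume "A \<in> Domain ` C" "B \<in> Domain ` C"
    then obtain \<Phi> \<Psi> where "\<Phi> \<in> C" "\<Psi> \<in> C" "A = Domain \<Phi>" "B = Domain \<Psi>" by blast
    then show "A \<subseteq> B \<or> B \<subseteq> A" using chain Domain_mono unfolding chain_subset_def by metis
  qed
  have "F \<subseteq> \<Union>(Domain ` C)" "Domain ` C \<noteq> {}" using F(2,3) by auto
  then obtain \<Delta> where "\<Delta> \<in> Domain ` C" "F \<subseteq> \<Delta>"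
    using finite_subset_Union_chain[OF F(1)] chain' unfolding chain_subset_alt_def by metis
  then obtain \<Phi> where "\<Phi> \<in> C" "F \<subseteq> Domain \<Phi>" by blast
  then show "\<exists>y S. (y, S) \<in> \<Union>C \<and> y \<in> F \<and> F - {y} \<subseteq> S"
    using gap_familiesD(2)[of \<Phi> D U F] C F(1,2) by blast
qed

definition max_gap_family :: "'a::boolean_algebra set \<Rightarrow> 'a set \<Rightarrow> ('a \<times> 'a set) set" where
  "max_gap_family D U =
     (SOME \<Phi>. \<Phi> \<in> gap_families D U \<and> (\<forall>\<Psi>\<in>gap_families D U. \<Phi> \<subseteq> \<Psi> \<longrightarrow> \<Psi> = \<Phi>))"

lemma max_gap_family:
  "max_gap_family D U \<in> gap_families D U"
  "\<Psi> \<in> gap_families D U \<Longrightarrow> max_gap_family D U \<subseteq> \<Psi> \<Longrightarrow> \<Psi> = max_gap_family D U"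
proof -
  have "\<exists>\<Phi>\<in>gap_families D U. \<forall>\<Psi>\<in>gap_families D U. \<Phi> \<subseteq> \<Psi> \<longrightarrow> \<Psi> = \<Phi>"
    by (rule Zorn_Lemma) (blast intro: gap_families_chain_Union)
  then have "max_gap_family D U \<in> gap_families D U \<and>
      (\<forall>\<Psi>\<in>gap_families D U. max_gap_family D U \<subseteq> \<Psi> \<longrightarrow> \<Psi> = max_gap_family D U)"
    unfolding max_gap_family_def Bex_def by (rule someI_ex)
  then show "max_gap_family D U \<in> gap_families D U"
    "\<Psi> \<in> gap_families D U \<Longrightarrow> max_gap_family D U \<subseteq> \<Psi> \<Longrightarrow> \<Psi> = max_gap_family D U"
    by blast+
qed

lemma fills_gap_in_Domain_max_gap_family:
  assumes "fills_gap D U (Domain (max_gap_family D U)) b"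
  shows "b \<in> Domain (max_gap_family D U)"
proof (rule ccontr)
  let ?\<Phi> = "max_gap_family D U"
  assume b: "b \<notin> Domain ?\<Phi>"
  have "insert (b, Domain ?\<Phi>) ?\<Phi> \<in> gap_families D U"
  proof (rule gap_familiesI)
    show "fills_gap D U S y" if "(y, S) \<in> insert (b, Domain ?\<Phi>) ?\<Phi>" for y S
      using that assms gap_familiesD(1)[OF max_gap_family(1)] by auto
    fix F assume F: "finite F" "F \<noteq> {}" "F \<subseteq> Domain (insert (b, Domain ?\<Phi>) ?\<Phi>)"
    show "\<exists>y S. (y, S) \<in> insert (b, Domain ?\<Phi>) ?\<Phi> \<and> y \<in> F \<and> F - {y} \<subseteq> S"
    proof (cases "b \<in> F")
      case True
      moreover have "F - {b} \<subseteq> Domain ?\<Phi>" using F(3) by auto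
      ultimately show ?thesis by (intro exI[of _ b] exI[of _ "Domain ?\<Phi>"]) simp
    next
      case False
      then have "F \<subseteq> Domain ?\<Phi>" using F(3) by auto
      then obtain y S where "(y, S) \<in> ?\<Phi>" "y \<in> F" "F - {y} \<subseteq> S"
        using gap_familiesD(2)[OF max_gap_family(1) F(1,2)] by blast
      then show ?thesis by blast
    qed
  qed
  then have "insert (b, Domain ?\<Phi>) ?\<Phi> = ?\<Phi>" by (rule max_gap_family(2)) blast
  then show False using b by blast
qed

lemma FN_closed_eq_UNIV:
  fixes A :: "'a::boolean_algebra set" and f :: "'a \<Rightarrow> 'a set" and \<kappa> :: "'k rel"
  assumes FN: "\<And>a b. a \<le> b \<Longrightarrow> \<exists>c\<in>f a \<inter> f b. a \<le> c \<and> c \<le> b"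
    and f_small: "\<And>a. |f a| <o \<kappa>"
    and subalgebra: "gen_subalgebra A \<subseteq> A"
    and f_closed: "\<And>a. a \<in> A \<Longrightarrow> f a \<subseteq> A"
    and gap_closed: "\<And>D U. D \<subseteq> A \<Longrightarrow> U \<subseteq> A \<Longrightarrow> |D| <o \<kappa> \<Longrightarrow> |U| <o \<kappa> \<Longrightarrow>
       Domain (max_gap_family D U) \<subseteq> A"
  shows "A = UNIV"
proof (rule ccontr)
  assume "A \<noteq> UNIV"
  then obtain b where b: "b \<notin> A" by blast
  define D where "D = {c \<in> f b \<inter> A. c \<le> b}"
  define U where "U = {c \<in> f b \<inter> A. b \<le> c}"
  have DU: "D \<subseteq> A" "U \<subseteq> A" "|D| <o \<kappa>" "|U| <o \<kappa>"
    unfolding D_def U_def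
    by (auto intro: ordLeq_ordLess_trans[OF card_of_mono1 f_small[of b]])
  let ?\<Phi> = "max_gap_family D U"
  have "gen_subalgebra (Domain ?\<Phi> \<union> D \<union> U) \<subseteq> gen_subalgebra A"
    using gap_closed[OF DU] DU(1,2) by (intro gen_subalgebra_mono) blast
  then have gen_A: "gen_subalgebra (Domain ?\<Phi> \<union> D \<union> U) \<subseteq> A"
    using subalgebra by blast
  have "fills_gap D U (Domain ?\<Phi>) b"
    unfolding fills_gap_def
  proof (intro conjI ballI impI)
    show "b \<notin> gen_subalgebra (Domain ?\<Phi> \<union> D \<union> U)" using gen_A b by blast
  next
    fix a assume a: "a \<in> gen_subalgebra (Domain ?\<Phi> \<union> D \<union> U)" "a \<le> b"
    obtain c where c: "c \<in> f a \<inter> f b" "a \<le> c" "c \<le> b" using FN[OF a(2)] by blast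
    have "c \<in> D" unfolding D_def using c f_closed[of a] a(1) gen_A by blast
    then show "\<exists>d\<in>D. a \<le> d" using c(2) by blast
  next
    fix a assume a: "a \<in> gen_subalgebra (Domain ?\<Phi> \<union> D \<union> U)" "b \<le> a"
    obtain c where c: "c \<in> f b \<inter> f a" "b \<le> c" "c \<le> a" using FN[OF a(2)] by blast
    have "c \<in> U" unfolding U_def using c f_closed[of a] a(1) gen_A by blast
    then show "\<exists>u\<in>U. u \<le> a" using c(3) by blast
  qed (auto simp: D_def U_def)
  then have "b \<in> Domain ?\<Phi>" by (rule fills_gap_in_Domain_max_gap_family)
  then show False using b gap_closed[OF DU] by blast
qed

section \<open>Closure under operations of arity below \<kappa>\<close>

definition closure_stages :: "'k rel \<Rightarrow> ('a set \<Rightarrow> 'a set) \<Rightarrow> 'k \<Rightarrow> 'a set" where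
  "closure_stages \<kappa> G = wo_rel.worec \<kappa> (\<lambda>S \<alpha>. G (\<Union>\<beta>\<in>underS \<kappa> \<alpha>. S \<beta>))"

lemma closure_stages_eq:
  assumes "Well_order \<kappa>"
  shows "closure_stages \<kappa> G \<alpha> = G (\<Union>\<beta>\<in>underS \<kappa> \<alpha>. closure_stages \<kappa> G \<beta>)"
proof -
  have wo: "wo_rel \<kappa>" using assms unfolding wo_rel_def .
  have "wo_rel.adm_wo \<kappa> (\<lambda>S \<alpha>. G (\<Union>\<beta>\<in>underS \<kappa> \<alpha>. S \<beta>))"
    unfolding wo_rel.adm_wo_def[OF wo] by (auto intro!: arg_cong[where f = G])
  then show ?thesis
    unfolding closure_stages_def by (subst wo_rel.worec_fixpoint[OF wo]) simp_all
qed

lemma card_of_closure_stages_le: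
  assumes \<kappa>: "Well_order \<kappa>" and W: "\<not> finite W" "|Field \<kappa>| \<le>o |W|"
    and G_bound: "\<And>X. |X| \<le>o |W| \<Longrightarrow> |G X| \<le>o |W|"
  shows "|closure_stages \<kappa> G \<alpha>| \<le>o |W|"
proof (induction \<alpha> rule: wo_rel.well_order_induct[OF \<kappa>[unfolded wo_rel_def[symmetric]]])
  case (1 \<alpha>)
  have "|underS \<kappa> \<alpha>| \<le>o |W|"
    using W(2) by (rule ordLeq_transitive[OF card_of_mono1[OF Order_Relation.underS_Field]])
  then have "|\<Union>\<beta>\<in>underS \<kappa> \<alpha>. closure_stages \<kappa> G \<beta>| \<le>o |W|"
    using 1 by (intro card_of_UNION_ordLeq_infinite[OF W(1)]) (auto simp: underS_def)
  then show ?case by (subst closure_stages_eq[OF \<kappa>]) (rule G_bound)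
qed

lemma regularCard_small_subset_UNION_underS:
  assumes \<kappa>: "Card_order \<kappa>" "cinfinite \<kappa>" "regularCard \<kappa>"
    and X: "X \<subseteq> (\<Union>\<alpha>\<in>Field \<kappa>. S \<alpha>)" "|X| <o \<kappa>"
  shows "\<exists>i\<in>Field \<kappa>. X \<subseteq> (\<Union>\<beta>\<in>underS \<kappa> i. S \<beta>)"
proof (rule regularCard_UNION[OF \<kappa>(1,3) _ _ X(2)])
  have wo: "wo_rel \<kappa>" using \<kappa>(1) unfolding wo_rel_def by (rule card_order_on_well_order_on)
  show "relChain \<kappa> (\<lambda>i. \<Union>\<beta>\<in>underS \<kappa> i. S \<beta>)"
    unfolding relChain_def
  proof (intro allI impI)
    fix i j assume "(i, j) \<in> \<kappa>"
    then have "underS \<kappa> i \<subseteq> underS \<kappa> j" by (intro underS_incr wo_rel.TRANS wo_rel.ANTISYM wo)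
    then show "(\<Union>\<beta>\<in>underS \<kappa> i. S \<beta>) \<subseteq> (\<Union>\<beta>\<in>underS \<kappa> j. S \<beta>)" by blast
  qed
  have "(\<Union>\<alpha>\<in>Field \<kappa>. S \<alpha>) \<subseteq> (\<Union>i\<in>Field \<kappa>. \<Union>\<beta>\<in>underS \<kappa> i. S \<beta>)"
  proof (rule UN_least)
    fix \<alpha> assume \<alpha>: "\<alpha> \<in> Field \<kappa>"
    obtain i where "i \<in> Field \<kappa>" "\<alpha> \<noteq> i" "(\<alpha>, i) \<in> \<kappa>"
      using infinite_Card_order_limit[OF \<kappa>(1) \<kappa>(2)[unfolded cinfinite_def] \<alpha>] by blast
    then show "S \<alpha> \<subseteq> (\<Union>i\<in>Field \<kappa>. \<Union>\<beta>\<in>underS \<kappa> i. S \<beta>)" unfolding underS_def by blast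
  qed
  with X(1) show "X \<subseteq> (\<Union>i\<in>Field \<kappa>. \<Union>\<beta>\<in>underS \<kappa> i. S \<beta>)" by (rule order_trans)
qed

lemma exists_small_closed_set:
  fixes \<kappa> :: "'k rel" and G :: "'a set \<Rightarrow> 'a set" and W :: "'w set"
  assumes \<kappa>: "Card_order \<kappa>" "cinfinite \<kappa>" "regularCard \<kappa>" and "mono G"
    and W: "|Field \<kappa>| \<le>o |W|" and G_bound: "\<And>X. |X| \<le>o |W| \<Longrightarrow> |G X| \<le>o |W|"
  obtains A where "|A| \<le>o |W|" "\<And>X. X \<subseteq> A \<Longrightarrow> |X| <o \<kappa> \<Longrightarrow> G X \<subseteq> A"
proof -
  let ?S = "closure_stages \<kappa> G"
  define A where "A = (\<Union>\<alpha>\<in>Field \<kappa>. ?S \<alpha>)"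
  have wo: "Well_order \<kappa>" using \<kappa>(1) by (rule card_order_on_well_order_on)
  have W_inf: "\<not> finite W" using \<kappa>(2) W card_of_ordLeq_finite unfolding cinfinite_def by blast
  have "|A| \<le>o |W|"
    unfolding A_def using W card_of_closure_stages_le[OF wo W_inf W G_bound]
    by (intro card_of_UNION_ordLeq_infinite[OF W_inf]) auto
  moreover have "G X \<subseteq> A" if X: "X \<subseteq> A" "|X| <o \<kappa>" for X
  proof -
    obtain i where "i \<in> Field \<kappa>" "X \<subseteq> (\<Union>\<beta>\<in>underS \<kappa> i. ?S \<beta>)"
      using regularCard_small_subset_UNION_underS[OF \<kappa> X(1)[unfolded A_def] X(2)] by blast
    then have "G X \<subseteq> G (\<Union>\<beta>\<in>underS \<kappa> i. ?S \<beta>)" using \<open>mono G\<close> by (auto dest: monoD)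
    also have "\<dots> = ?S i" by (rule closure_stages_eq[OF wo, symmetric])
    finally show "G X \<subseteq> A" using \<open>i \<in> Field \<kappa>\<close> unfolding A_def by blast
  qed
  ultimately show thesis by (rule that)
qed

section \<open>Function spaces with small domains\<close>

lemma finite_card_of_ordLess:
  assumes "Card_order \<kappa>" "cinfinite \<kappa>" "finite A"
  shows "|A| <o \<kappa>"
  using assms unfolding cinfinite_def
  by (intro finite_ordLess_infinite card_of_Well_order card_order_on_well_order_on)
    (auto simp: Field_card_of)

lemma card_of_insert_ordLess:
  assumes "Card_order \<kappa>" "cinfinite \<kappa>" "|A| <o \<kappa>"
  shows "|insert a A| <o \<kappa>"
proof -
  have "|{a} \<union> A| <o \<kappa>"
    using assms finite_card_of_ordLess[OF assms(1,2), of "{a}"]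
    by (intro card_of_Un_ordLess_infinite_Field) (auto simp: cinfinite_def)
  then show ?thesis by simp
qed

lemma card_of_Func_mono:
  assumes "|A| \<le>o |B|" "|X| \<le>o |Y|" "A = {} \<Longrightarrow> B = {}"
  shows "|Func A X| \<le>o |Func B Y|"
  using cexp_mono'[of "|X|" "|Y|" "|A|" "|B|"] assms by (simp add: cexp_def Field_card_of)

lemma card_of_Func_mono_dom:
  assumes "|A| \<le>o |B|" "X \<noteq> {}"
  shows "|Func A X| \<le>o |Func B X|"
proof (cases "A = {}")
  case True
  then show ?thesis using assms(2) by (simp add: Func_empty card_of_singl_ordLeq Func_is_emp)
next
  case False
  then show ?thesis by (intro card_of_Func_mono assms(1) ordLeq_refl card_of_Card_order) simp
qed

lemma card_of_Sigma_mono_inj: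
  assumes "inj_on u I" "u ` I \<subseteq> J" "\<And>i. i \<in> I \<Longrightarrow> |A i| \<le>o |B (u i)|"
  shows "|Sigma I A| \<le>o |Sigma J B|"
proof -
  have "|Sigma I A| \<le>o |Sigma I (\<lambda>i. B (u i))|"
    using assms(3) by (intro card_of_Sigma_mono1) blast
  also have "|Sigma I (\<lambda>i. B (u i))| =o |Sigma (u ` I) B|"
    using assms(1) by (intro card_of_Sigma_cong2) (simp add: bij_betw_def)
  also have "|Sigma (u ` I) B| \<le>o |Sigma J B|"
    using assms(2) by (intro card_of_mono1) blast
  finally show ?thesis .
qed

lemma csup_spec:
  "csup I A \<subseteq> Sigma I A \<and> (\<forall>i\<in>I. |A i| \<le>o |csup I A| ) \<and>
   (\<forall>T. T \<subseteq> Sigma I A \<and> (\<forall>i\<in>I. |A i| \<le>o |T| ) \<longrightarrow> |csup I A| \<le>o |T| )"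
proof -
  let ?UB = "{T. T \<subseteq> Sigma I A \<and> (\<forall>i\<in>I. |A i| \<le>o |T| )}"
  have "|A i| \<le>o |Sigma I A|" if "i \<in> I" for i
    unfolding card_of_ordLeq[symmetric] using that
    by (intro exI[of _ "Pair i"] conjI inj_onI) auto
  then have "Sigma I A \<in> ?UB" by blast
  then obtain r where r: "r \<in> card_of ` ?UB" "\<forall>r'\<in>card_of ` ?UB. r \<le>o r'"
    using exists_minim_Well_order[of "card_of ` ?UB"] card_of_Well_order by blast
  then obtain T0 where "T0 \<in> ?UB" "r = |T0|" by blast
  then have "\<exists>T. T \<subseteq> Sigma I A \<and> (\<forall>i\<in>I. |A i| \<le>o |T| ) \<and>
      (\<forall>T'. T' \<subseteq> Sigma I A \<and> (\<forall>i\<in>I. |A i| \<le>o |T'| ) \<longrightarrow> |T| \<le>o |T'| )"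
    using r(2) by blast
  then show ?thesis unfolding csup_def by (rule someI_ex)
qed

lemma card_of_le_csup: "i \<in> I \<Longrightarrow> |A i| \<le>o |csup I A|"
  using csup_spec[of I A] by simp

lemma card_of_csup_le: "T \<subseteq> Sigma I A \<Longrightarrow> (\<And>i. i \<in> I \<Longrightarrow> |A i| \<le>o |T| ) \<Longrightarrow> |csup I A| \<le>o |T|"
  using csup_spec[of I A] by simp

definition small_subsets :: "'k rel \<Rightarrow> 'b set \<Rightarrow> 'b set set" where
  "small_subsets \<kappa> K = {M. M \<subseteq> K \<and> |M| <o \<kappa>}"

definition small_funcs :: "'k rel \<Rightarrow> 'b set \<Rightarrow> 'l set \<Rightarrow> ('b set \<times> ('b \<Rightarrow> 'l)) set" where
  "small_funcs \<kappa> K L = Sigma (small_subsets \<kappa> K) (\<lambda>M. Func M L)"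

lemma cpow_less_eq_csup: "cpow_less L \<kappa> = csup (small_subsets \<kappa> (Field \<kappa>)) (\<lambda>M. Func M L)"
  by (simp add: cpow_less_def small_subsets_def)

lemma card_of_small_funcs_mono:
  assumes "|K| \<le>o |K'|" "|X| \<le>o |Y|"
  shows "|small_funcs \<kappa> K X| \<le>o |small_funcs \<kappa> K' Y|"
proof -
  obtain \<phi> where \<phi>: "inj_on \<phi> K" "\<phi> ` K \<subseteq> K'"
    using assms(1) unfolding card_of_ordLeq[symmetric] by blast
  show ?thesis
    unfolding small_funcs_def
  proof (rule card_of_Sigma_mono_inj)
    show "inj_on (image \<phi>) (small_subsets \<kappa> K)"
      using inj_on_image_Pow[OF \<phi>(1)] by (rule inj_on_subset) (auto simp: small_subsets_def)
    show "image \<phi> ` small_subsets \<kappa> K \<subseteq> small_subsets \<kappa> K'"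
    proof
      fix N assume "N \<in> image \<phi> ` small_subsets \<kappa> K"
      then obtain M where M: "M \<subseteq> K" "|M| <o \<kappa>" "N = \<phi> ` M" by (auto simp: small_subsets_def)
      then have "|N| <o \<kappa>" using ordLeq_ordLess_trans[OF card_of_image M(2)] by simp
      moreover have "N \<subseteq> K'" using \<phi>(2) M(1,3) by blast
      ultimately show "N \<in> small_subsets \<kappa> K'" unfolding small_subsets_def by blast
    qed
  next
    fix M assume "M \<in> small_subsets \<kappa> K"
    then have "inj_on \<phi> M" using \<phi>(1) inj_on_subset by (auto simp: small_subsets_def)
    then have "bij_betw \<phi> M (\<phi> ` M)" by (rule inj_on_imp_bij_betw)
    then have "|M| \<le>o |\<phi> ` M|" using card_of_ordIso ordIso_iff_ordLeq by blast
    then show "|Func M X| \<le>o |Func (\<phi> ` M) Y|"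
      using assms(2) by (rule card_of_Func_mono) simp
  qed
qed

(* The pairs (m, None) record m \<in> M even when fst (g m) is empty; l0 is a dummy value. *)
definition flatten_small_funcs :: "'l \<Rightarrow> 'b set \<times> ('b \<Rightarrow> 'b set \<times> ('b \<Rightarrow> 'l))
    \<Rightarrow> ('b \<times> 'b option) set \<times> ('b \<times> 'b option \<Rightarrow> 'l)" where
  "flatten_small_funcs l0 = (\<lambda>(M, g). (SIGMA m:M. insert None (Some ` fst (g m)),
     \<lambda>(m, x). if m \<in> M then (case x of None \<Rightarrow> l0
       | Some y \<Rightarrow> if y \<in> fst (g m) then snd (g m) y else undefined) else undefined))"

lemma inj_on_flatten_small_funcs: "inj_on (flatten_small_funcs l0) (small_funcs \<kappa> K (small_funcs \<kappa> K L))"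
proof (rule inj_onI, clarify)
  fix M g M' g'
  assume g: "(M, g) \<in> small_funcs \<kappa> K (small_funcs \<kappa> K L)"
    and g': "(M', g') \<in> small_funcs \<kappa> K (small_funcs \<kappa> K L)"
    and eq: "flatten_small_funcs l0 (M, g) = flatten_small_funcs l0 (M', g')"
  have sets: "(SIGMA m:M. insert None (Some ` fst (g m))) = (SIGMA m:M'. insert None (Some ` fst (g' m)))"
    and vals: "snd (flatten_small_funcs l0 (M, g)) = snd (flatten_small_funcs l0 (M', g'))"
    using eq unfolding flatten_small_funcs_def by auto
  have M: "M' = M" using sets by blast
  have "g m = g' m" for m
  proof (cases "m \<in> M")
    case True
    have N: "fst (g' m) = fst (g m)" using sets True M by blast
    have "g m \<in> small_funcs \<kappa> K L" "g' m \<in> small_funcs \<kappa> K L"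
      using g g' True M unfolding small_funcs_def Func_def by auto
    then have "snd (g m) \<in> Func (fst (g m)) L" "snd (g' m) \<in> Func (fst (g m)) L"
      using N unfolding small_funcs_def by (auto simp: mem_Times_iff)
    moreover have "snd (g m) y = snd (g' m) y" if "y \<in> fst (g m)" for y
      using fun_cong[OF vals, of "(m, Some y)"] True M N that by (simp add: flatten_small_funcs_def)
    ultimately have "snd (g m) = snd (g' m)" unfolding Func_def by fastforce
    then show ?thesis using N by (simp add: prod_eq_iff)
  next
    case False
    then show ?thesis using g g' M unfolding small_funcs_def Func_def by auto
  qed
  then show "M = M' \<and> g = g'" using M by auto
qed

lemma flatten_small_funcs_in:
  assumes \<kappa>: "Card_order \<kappa>" "cinfinite \<kappa>" "regularCard \<kappa>" and "l0 \<in> L"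
    and p: "p \<in> small_funcs \<kappa> K (small_funcs \<kappa> K L)"
  shows "flatten_small_funcs l0 p \<in> small_funcs \<kappa> (K \<times> insert None (Some ` K)) L"
proof -
  obtain M g where p_eq: "p = (M, g)" by (cases p)
  have M: "M \<subseteq> K" "|M| <o \<kappa>" and g_in: "\<And>m. m \<in> M \<Longrightarrow> g m \<in> small_funcs \<kappa> K L"
    using p unfolding p_eq small_funcs_def small_subsets_def Func_def by auto
  have g: "fst (g m) \<subseteq> K" "|fst (g m)| <o \<kappa>" "snd (g m) \<in> Func (fst (g m)) L"
    if "m \<in> M" for m
    using g_in[OF that] unfolding small_funcs_def small_subsets_def by (auto simp: mem_Sigma_iff)
  let ?C = "SIGMA m:M. insert None (Some ` fst (g m))"
  have "|?C| <o \<kappa>"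
    using regularCard_stable[OF \<kappa>(1) \<kappa>(2)[unfolded cinfinite_def] \<kappa>(3)] M(2)
  proof (rule stable_elim)
    fix m assume "m \<in> M"
    then have "|Some ` fst (g m)| <o \<kappa>" by (rule ordLeq_ordLess_trans[OF card_of_image g(2)])
    then show "|insert None (Some ` fst (g m))| <o \<kappa>" by (rule card_of_insert_ordLess[OF \<kappa>(1,2)])
  qed
  moreover have "?C \<subseteq> K \<times> insert None (Some ` K)" using M(1) g(1) by blast
  moreover have "snd (flatten_small_funcs l0 (M, g)) \<in> Func ?C L"
    using g(3) \<open>l0 \<in> L\<close> unfolding flatten_small_funcs_def Func_def by (auto split: option.split)
  ultimately show ?thesis by (simp add: p_eq flatten_small_funcs_def small_funcs_def small_subsets_def)
qed

lemma card_of_small_funcs_absorb: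
  assumes \<kappa>: "Card_order \<kappa>" "cinfinite \<kappa>" "regularCard \<kappa>" and "l0 \<in> L" and K: "\<not> finite K"
  shows "|small_funcs \<kappa> K (small_funcs \<kappa> K L)| \<le>o |small_funcs \<kappa> K L|"
proof -
  have "|{None} \<union> Some ` K| \<le>o |K|"
    using K finite_card_of_ordLess[OF card_of_Card_order, of K "{None}"]
    by (intro card_of_Un_ordLeq_infinite_Field card_of_image ordLess_imp_ordLeq card_of_Card_order)
      (auto simp: cinfinite_def Field_card_of)
  then have "|K \<times> insert None (Some ` K)| \<le>o |K|"
    by (intro card_of_Sigma_ordLeq_infinite[OF K ordLeq_refl[OF card_of_Card_order]]) simp
  have "|small_funcs \<kappa> K (small_funcs \<kappa> K L)| \<le>o |small_funcs \<kappa> (K \<times> insert None (Some ` K)) L|"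
    unfolding card_of_ordLeq[symmetric] using flatten_small_funcs_in[OF assms(1-4)]
    by (intro exI[of _ "flatten_small_funcs l0"] conjI inj_on_flatten_small_funcs image_subsetI)
  also have "|small_funcs \<kappa> (K \<times> insert None (Some ` K)) L| \<le>o |small_funcs \<kappa> K L|"
    using \<open>|K \<times> insert None (Some ` K)| \<le>o |K|\<close>
    by (rule card_of_small_funcs_mono[OF _ ordLeq_refl[OF card_of_Card_order]])
  finally show ?thesis .
qed

lemma card_of_small_subsets_le_small_funcs:
  assumes "Card_order \<kappa>"
  shows "|small_subsets \<kappa> X| \<le>o |small_funcs \<kappa> (Field \<kappa>) X|"
proof -
  have "small_subsets \<kappa> X \<subseteq> (\<lambda>(M, g). g ` M) ` small_funcs \<kappa> (Field \<kappa>) X"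
  proof
    fix D assume "D \<in> small_subsets \<kappa> X"
    then have D: "D \<subseteq> X" "|D| <o \<kappa>" unfolding small_subsets_def by auto
    have "|D| \<le>o |Field \<kappa>|"
      using ordLess_imp_ordLeq[OF D(2)] ordIso_symmetric[OF card_of_Field_ordIso[OF assms]]
      by (rule ordLeq_ordIso_trans)
    then obtain h where h: "inj_on h D" "h ` D \<subseteq> Field \<kappa>" unfolding card_of_ordLeq[symmetric] by blast
    define g where "g x = (if x \<in> h ` D then inv_into D h x else undefined)" for x
    have "h ` D \<in> small_subsets \<kappa> (Field \<kappa>)"
      using h(2) ordLeq_ordLess_trans[OF card_of_image D(2)] unfolding small_subsets_def by blast
    moreover have "g \<in> Func (h ` D) X" using D(1) h(1) unfolding g_def Func_def by auto
    moreover have "g ` h ` D = D"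
    proof -
      have "g ` h ` D = inv_into D h ` h ` D" unfolding g_def by (rule image_cong) simp_all
      also have "\<dots> = D" by (rule inv_into_image_cancel[OF h(1) order_refl])
      finally show ?thesis .
    qed
    ultimately show "D \<in> (\<lambda>(M, g). g ` M) ` small_funcs \<kappa> (Field \<kappa>) X"
      unfolding small_funcs_def by (intro rev_image_eqI[of "(h ` D, g)"]) simp_all
  qed
  then have "|small_subsets \<kappa> X| \<le>o |(\<lambda>(M, g). g ` M) ` small_funcs \<kappa> (Field \<kappa>) X|"
    by (rule card_of_mono1)
  then show ?thesis using card_of_image by (rule ordLeq_transitive)
qed

lemma card_of_small_subsets_le:
  assumes \<kappa>: "Card_order \<kappa>" "cinfinite \<kappa>" "regularCard \<kappa>" and "l0 \<in> L"
    and X: "|X| \<le>o |small_funcs \<kappa> (Field \<kappa>) L|"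
  shows "|small_subsets \<kappa> X| \<le>o |small_funcs \<kappa> (Field \<kappa>) L|"
proof -
  have "|small_subsets \<kappa> X| \<le>o |small_funcs \<kappa> (Field \<kappa>) X|"
    by (rule card_of_small_subsets_le_small_funcs[OF \<kappa>(1)])
  also have "|small_funcs \<kappa> (Field \<kappa>) X| \<le>o |small_funcs \<kappa> (Field \<kappa>) (small_funcs \<kappa> (Field \<kappa>) L)|"
    by (rule card_of_small_funcs_mono[OF ordLeq_refl[OF card_of_Card_order] X])
  also have "|small_funcs \<kappa> (Field \<kappa>) (small_funcs \<kappa> (Field \<kappa>) L)| \<le>o |small_funcs \<kappa> (Field \<kappa>) L|"
    using \<kappa> \<open>l0 \<in> L\<close> by (rule card_of_small_funcs_absorb) (use \<kappa>(2) in \<open>simp add: cinfinite_def\<close>)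
  finally show ?thesis .
qed

lemma card_of_Times_le_small_funcs:
  fixes \<kappa> :: "'k rel" and L :: "'l set"
  assumes "Card_order \<kappa>" "cinfinite \<kappa>"
  shows "|Field \<kappa> \<times> L| \<le>o |small_funcs \<kappa> (Field \<kappa>) L|"
proof -
  define e :: "'k \<times> 'l \<Rightarrow> 'k set \<times> ('k \<Rightarrow> 'l)"
    where "e = (\<lambda>(a, l). ({a}, \<lambda>x. if x = a then l else undefined))"
  have "inj_on e (Field \<kappa> \<times> L)"
  proof (rule inj_onI, clarify)
    fix a l b m assume eq: "e (a, l) = e (b, m)"
    then have "a = b" unfolding e_def by simp
    moreover have "snd (e (a, l)) a = snd (e (b, m)) a" using eq by simp
    ultimately show "a = b \<and> l = m" unfolding e_def by simp
  qed
  moreover have "e ` (Field \<kappa> \<times> L) \<subseteq> small_funcs \<kappa> (Field \<kappa>) L"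
  proof (rule image_subsetI)
    fix p assume "p \<in> Field \<kappa> \<times> L"
    moreover have "|{fst p}| <o \<kappa>" by (rule finite_card_of_ordLess[OF assms]) simp
    ultimately show "e p \<in> small_funcs \<kappa> (Field \<kappa>) L"
      unfolding e_def small_funcs_def small_subsets_def Func_def by (auto split: prod.split)
  qed
  ultimately show ?thesis unfolding card_of_ordLeq[symmetric] by blast
qed

lemma card_of_UNIV_bool_le_infinite: "infinite L \<Longrightarrow> |UNIV :: bool set| \<le>o |L|"
  by (intro ordLess_imp_ordLeq finite_card_of_ordLess card_of_Card_order)
    (simp_all add: cinfinite_def Field_card_of)

lemma card_of_Pow_le_Func:
  assumes "|UNIV :: bool set| \<le>o |L|"
  shows "|Pow M| \<le>o |Func M L|"
proof -
  have "|Func M (UNIV :: bool set)| \<le>o |Func M L|"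
    using assms by (rule card_of_Func_mono[OF ordLeq_refl[OF card_of_Card_order]])
  with card_of_Pow_Func show ?thesis by (rule ordIso_ordLeq_trans)
qed

lemma card_of_Func_le_cpow_less:
  "M \<subseteq> Field \<kappa> \<Longrightarrow> |M| <o \<kappa> \<Longrightarrow> |Func M L| \<le>o |cpow_less L \<kappa>|"
  unfolding cpow_less_eq_csup by (rule card_of_le_csup) (simp add: small_subsets_def)

lemma card_of_Field_le_cpow_less:
  assumes \<kappa>: "Card_order \<kappa>" and L: "|UNIV :: bool set| \<le>o |L|"
  shows "|Field \<kappa>| \<le>o |cpow_less L \<kappa>|"
proof (rule ccontr)
  let ?P = "cpow_less L \<kappa>"
  assume "\<not> |Field \<kappa>| \<le>o |?P|"
  then have less: "|?P| <o |Field \<kappa>|"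
    by (simp add: not_ordLeq_iff_ordLess[OF card_of_Well_order card_of_Well_order])
  then obtain h where h: "inj_on h ?P" "h ` ?P \<subseteq> Field \<kappa>"
    using ordLess_imp_ordLeq[OF less] unfolding card_of_ordLeq[symmetric] by blast
  have "|h ` ?P| <o \<kappa>"
    using ordLeq_ordLess_trans[OF card_of_image less] card_of_Field_ordIso[OF \<kappa>]
    by (rule ordLess_ordIso_trans)
  then have "|Func (h ` ?P) L| \<le>o |?P|" using h(2) by (intro card_of_Func_le_cpow_less)
  with card_of_Pow_le_Func[OF L] have "|Pow (h ` ?P)| \<le>o |?P|" by (rule ordLeq_transitive)
  moreover have "|?P| =o |h ` ?P|"
    using inj_on_imp_bij_betw[OF h(1)] unfolding card_of_ordIso[symmetric] by blast
  ultimately have "|Pow (h ` ?P)| \<le>o |h ` ?P|" by (rule ordLeq_ordIso_trans)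
  then show False using card_of_Pow[of "h ` ?P"] not_ordLess_ordLeq by blast
qed

lemma infinite_cpow_less:
  assumes "Card_order \<kappa>" "cinfinite \<kappa>" "|UNIV :: bool set| \<le>o |L|"
  shows "\<not> finite (cpow_less L \<kappa>)"
  using card_of_Field_le_cpow_less[OF assms(1,3)] assms(2) card_of_ordLeq_finite
  unfolding cinfinite_def by blast

lemma small_subset_under:
  assumes "Card_order \<kappa>" "regularCard \<kappa>" "K \<subseteq> Field \<kappa>" "|K| <o \<kappa>"
  shows "\<exists>a\<in>Field \<kappa>. K \<subseteq> under \<kappa> a"
proof (rule regularCard_UNION[OF assms(1,2) _ _ assms(4)])
  have wo: "wo_rel \<kappa>" using assms(1) unfolding wo_rel_def by (rule card_order_on_well_order_on)
  then show "relChain \<kappa> (under \<kappa>)"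
    unfolding relChain_def by (intro allI impI under_incr[OF wo_rel.TRANS[OF wo]])
  show "K \<subseteq> (\<Union>a\<in>Field \<kappa>. under \<kappa> a)"
  proof
    fix x assume "x \<in> K"
    then have "x \<in> Field \<kappa>" using assms(3) by blast
    then show "x \<in> (\<Union>a\<in>Field \<kappa>. under \<kappa> a)"
      using Refl_under_in[OF wo_rel.REFL[OF wo]] by blast
  qed
qed

lemma card_of_under_ordLess:
  assumes "Card_order \<kappa>" "cinfinite \<kappa>" "a \<in> Field \<kappa>"
  shows "|under \<kappa> a| <o \<kappa>"
proof -
  have "|insert a (underS \<kappa> a)| <o \<kappa>"
    using card_of_underS[OF assms(1,3)] by (rule card_of_insert_ordLess[OF assms(1,2)])
  moreover have "under \<kappa> a \<subseteq> insert a (underS \<kappa> a)" unfolding under_def underS_def by blast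
  ultimately show ?thesis using ordLeq_ordLess_trans[OF card_of_mono1] by blast
qed

lemma card_of_small_subsets_le_cpow_less:
  assumes \<kappa>: "Card_order \<kappa>" "cinfinite \<kappa>" "regularCard \<kappa>" and L: "|UNIV :: bool set| \<le>o |L|"
  shows "|small_subsets \<kappa> (Field \<kappa>)| \<le>o |cpow_less L \<kappa>|"
proof -
  have Field_le: "|Field \<kappa>| \<le>o |cpow_less L \<kappa>|" by (rule card_of_Field_le_cpow_less[OF \<kappa>(1) L])
  have P_inf: "\<not> finite (cpow_less L \<kappa>)" by (rule infinite_cpow_less[OF \<kappa>(1,2) L])
  have "small_subsets \<kappa> (Field \<kappa>) \<subseteq> (\<Union>a\<in>Field \<kappa>. Pow (under \<kappa> a))"
    using small_subset_under[OF \<kappa>(1,3)] unfolding small_subsets_def by blast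
  then have "|small_subsets \<kappa> (Field \<kappa>)| \<le>o |\<Union>a\<in>Field \<kappa>. Pow (under \<kappa> a)|"
    by (rule card_of_mono1)
  also have "|\<Union>a\<in>Field \<kappa>. Pow (under \<kappa> a)| \<le>o |cpow_less L \<kappa>|"
  proof (rule card_of_UNION_ordLeq_infinite[OF P_inf Field_le], rule ballI)
    fix a assume "a \<in> Field \<kappa>"
    then have "|Func (under \<kappa> a) L| \<le>o |cpow_less L \<kappa>|"
      by (intro card_of_Func_le_cpow_less under_Field card_of_under_ordLess[OF \<kappa>(1,2)])
    with card_of_Pow_le_Func[OF L] show "|Pow (under \<kappa> a)| \<le>o |cpow_less L \<kappa>|"
      by (rule ordLeq_transitive)
  qed
  finally show ?thesis .
qed

lemma card_of_small_funcs_le_cpow_less: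
  assumes \<kappa>: "Card_order \<kappa>" "cinfinite \<kappa>" "regularCard \<kappa>" and L: "|UNIV :: bool set| \<le>o |L|"
  shows "|small_funcs \<kappa> (Field \<kappa>) L| \<le>o |cpow_less L \<kappa>|"
  unfolding small_funcs_def
  using infinite_cpow_less[OF \<kappa>(1,2) L] card_of_small_subsets_le_cpow_less[OF assms]
  by (rule card_of_Sigma_ordLeq_infinite) (auto simp: small_subsets_def intro: card_of_Func_le_cpow_less)

lemma card_of_cpow_less_cardSuc_natLeq:
  assumes "L \<noteq> {}"
  shows "|cpow_less L (cardSuc natLeq)| \<le>o |Func (UNIV :: nat set) L|"
proof -
  let ?\<kappa> = "cardSuc natLeq"
  have "\<not> finite (Field ?\<kappa>)" using Cinfinite_cardSuc[OF natLeq_Cinfinite] by (simp add: cinfinite_def)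
  then obtain g :: "nat \<Rightarrow> _" where g: "inj g" "range g \<subseteq> Field ?\<kappa>"
    using infinite_countable_subset by blast
  let ?M0 = "range g"
  have "bij_betw g UNIV ?M0" using g(1) by (rule inj_on_imp_bij_betw)
  then have M0_nat: "|?M0| =o |UNIV :: nat set|"
    unfolding card_of_ordIso[symmetric] by (blast intro: bij_betw_inv_into)
  have "|?M0| <o ?\<kappa>"
    using M0_nat ordIso_ordLess_trans[OF card_of_nat cardSuc_greater[OF natLeq_Card_order]]
    by (rule ordIso_ordLess_trans)
  then have M0: "?M0 \<in> small_subsets ?\<kappa> (Field ?\<kappa>)" using g(2) by (simp add: small_subsets_def)
  let ?T = "Pair ?M0 ` Func ?M0 L"
  have T_iso: "|Func ?M0 L| =o |?T|"
    unfolding card_of_ordIso[symmetric] by (intro exI[of _ "Pair ?M0"] inj_on_imp_bij_betw inj_onI) simp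
  have "|cpow_less L ?\<kappa>| \<le>o |?T|"
    unfolding cpow_less_eq_csup
  proof (rule card_of_csup_le)
    show "?T \<subseteq> Sigma (small_subsets ?\<kappa> (Field ?\<kappa>)) (\<lambda>M. Func M L)" using M0 by blast
    fix M assume "M \<in> small_subsets ?\<kappa> (Field ?\<kappa>)"
    then have "|M| \<le>o natLeq"
      using cardSuc_ordLeq_ordLess[OF natLeq_Card_order card_of_Card_order, of M]
      by (simp add: small_subsets_def)
    also have "natLeq =o |?M0|"
      by (rule ordIso_symmetric[OF ordIso_transitive[OF M0_nat card_of_nat]])
    finally have "|Func M L| \<le>o |Func ?M0 L|" by (rule card_of_Func_mono_dom[OF _ assms])
    also note T_iso
    finally show "|Func M L| \<le>o |?T|" .
  qed
  also have "|?T| \<le>o |Func ?M0 L|" by (rule card_of_image)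
  also have "|Func ?M0 L| \<le>o |Func (UNIV :: nat set) L|"
    by (rule card_of_Func_mono_dom[OF ordIso_imp_ordLeq[OF M0_nat] assms])
  finally show ?thesis .
qed

section \<open>Independent sets\<close>

lemma top_ne_bot_if_infinite:
  assumes "infinite (UNIV :: 'a::boolean_algebra set)"
  shows "top \<noteq> (bot :: 'a)"
proof
  assume "top = (bot :: 'a)"
  then have "x = bot" for x :: 'a by (metis bot_unique top_greatest)
  then have "(UNIV :: 'a set) \<subseteq> {bot}" by blast
  then show False using assms finite_subset by blast
qed

lemma card_of_independent_le_Ind:
  fixes Y :: "'a::boolean_algebra set"
  assumes "independent Y"
  shows "|Y| \<le>o |Ind_set TYPE('a)|"
  unfolding Ind_set_def by (rule card_of_le_csup[where A = "\<lambda>Y. Y"]) (simp add: assms)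

lemma infinite_below_split:
  fixes e :: "'a::boolean_algebra"
  assumes "infinite {x. x \<le> e}"
  obtains x1 x2 where "x1 \<le> e" "x2 \<le> e" "x2 \<noteq> bot" "inf x1 x2 = bot" "infinite {x. x \<le> x1}"
proof -
  obtain x where x: "x \<le> e" "x \<noteq> bot" "x \<noteq> e"
  proof -
    have "\<not> {x. x \<le> e} \<subseteq> {bot, e}" using assms finite_subset by blast
    then show thesis using that by blast
  qed
  let ?x' = "inf e (- x)"
  have "?x' \<noteq> bot"
  proof
    assume "?x' = bot"
    then have "e \<le> x" by (simp add: inf_shunt)
    then show False using x(1,3) by simp
  qed
  have "{y. y \<le> e} \<subseteq> case_prod sup ` ({y. y \<le> x} \<times> {y. y \<le> ?x'})"
  proof
    fix y assume "y \<in> {y. y \<le> e}"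
    then have "inf y (- x) \<le> ?x'" by (simp add: le_infI1)
    moreover have "y = sup (inf y x) (inf y (- x))" by (simp flip: inf_sup_distrib1)
    ultimately show "y \<in> case_prod sup ` ({y. y \<le> x} \<times> {y. y \<le> ?x'})"
      by (intro rev_image_eqI[of "(inf y x, inf y (- x))"]) auto
  qed
  then have "infinite {y. y \<le> x} \<or> infinite {y. y \<le> ?x'}"
    using assms finite_subset by blast
  moreover have "inf x ?x' = bot" "inf ?x' x = bot" by (simp_all add: inf_commute inf_left_commute)
  ultimately show thesis
    using that x(1,2) \<open>?x' \<noteq> bot\<close> by (meson inf_le1)
qed

lemma exists_disjoint_family:
  fixes e :: "'a::boolean_algebra"
  assumes "finite I" "infinite {x. x \<le> e}"
  shows "\<exists>a. (\<forall>i\<in>I. a i \<noteq> bot \<and> a i \<le> e) \<and> (\<forall>i\<in>I. \<forall>j\<in>I. i \<noteq> j \<longrightarrow> inf (a i) (a j) = bot)"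
  using assms
proof (induction I arbitrary: e rule: finite_induct)
  case empty
  then show ?case by simp
next
  case (insert i I)
  obtain x1 x2 where x: "x1 \<le> e" "x2 \<le> e" "x2 \<noteq> bot" "inf x1 x2 = bot" "infinite {x. x \<le> x1}"
    using infinite_below_split[OF insert.prems] .
  obtain a where a: "\<forall>i\<in>I. a i \<noteq> bot \<and> a i \<le> x1" "\<forall>i\<in>I. \<forall>j\<in>I. i \<noteq> j \<longrightarrow> inf (a i) (a j) = bot"
    using insert.IH[OF x(5)] by blast
  have disj: "inf x2 (a j) = bot" if "j \<in> I" for j
  proof -
    have "inf x2 (a j) \<le> inf x2 x1" using a(1) that by (simp add: le_infI2)
    then show ?thesis using x(4) by (simp add: inf_commute bot_unique)
  qed
  let ?a = "a(i := x2)"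
  have "\<forall>k\<in>insert i I. ?a k \<noteq> bot \<and> ?a k \<le> e"
    using a(1) x(1-3) insert.hyps(2) by (auto intro: order_trans)
  moreover have "\<forall>k\<in>insert i I. \<forall>j\<in>insert i I. k \<noteq> j \<longrightarrow> inf (?a k) (?a j) = bot"
    using a(2) disj insert.hyps(2) by (auto simp: inf_commute)
  ultimately show ?case by blast
qed

lemma independent_joins_of_disjoint_family:
  fixes a :: "'i set \<Rightarrow> 'a::boolean_algebra"
  assumes N: "finite N"
    and nonzero: "\<And>S. S \<subseteq> N \<Longrightarrow> a S \<noteq> bot"
    and disjoint: "\<And>S T. S \<subseteq> N \<Longrightarrow> T \<subseteq> N \<Longrightarrow> S \<noteq> T \<Longrightarrow> inf (a S) (a T) = bot"
  defines "y \<equiv> \<lambda>j. Sup_fin (a ` {S. S \<subseteq> N \<and> j \<in> S})"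
  shows "inj_on y N" and "independent (y ` N)"
proof -
  have fin: "finite {S. S \<subseteq> N \<and> j \<in> S}" for j using N by simp
  have y_ge: "a S \<le> y j" if "S \<subseteq> N" "j \<in> S" for S j
    unfolding y_def using that fin by (intro Sup_fin.coboundedI) auto
  have y_disj: "inf (a S) (y j) = bot" if "S \<subseteq> N" "j \<in> N" "j \<notin> S" for S j
  proof -
    have "y j \<le> - a S"
      unfolding y_def using that fin disjoint by (intro Sup_fin.boundedI) (auto simp flip: inf_shunt)
    then show ?thesis by (simp add: inf_shunt compl_le_swap1)
  qed
  show "inj_on y N"
  proof (rule inj_onI, rule ccontr)
    fix j k assume jk: "j \<in> N" "k \<in> N" "y j = y k" "j \<noteq> k"
    then have "a {j} \<le> y k" using y_ge[of "{j}" j] by simp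
    moreover have "inf (a {j}) (y k) = bot" using jk by (intro y_disj) auto
    ultimately have "a {j} = bot" by (simp add: inf_absorb1)
    then show False using nonzero[of "{j}"] jk(1) by simp
  qed
  show "independent (y ` N)"
    unfolding independent_def
  proof (intro allI impI)
    fix F eps assume F: "finite F \<and> F \<subseteq> y ` N"
    define S where "S = {j \<in> N. y j \<in> F \<and> eps (y j)}"
    have S: "S \<subseteq> N" unfolding S_def by auto
    have "a S \<le> signed eps z" if z: "z \<in> F" for z
    proof -
      obtain j where j: "j \<in> N" "z = y j" using F z by blast
      show ?thesis
      proof (cases "eps z")
        case True
        then show ?thesis using y_ge[OF S, of j] j z by (simp add: signed_def S_def)
      next
        case False
        then have "inf (a S) (y j) = bot" using j by (intro y_disj[OF S]) (auto simp: S_def)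
        then show ?thesis using False j by (simp add: signed_def inf_shunt)
      qed
    qed
    then have "a S \<le> el_prod F eps" using F by (simp add: le_el_prod_iff)
    then show "el_prod F eps \<noteq> bot" using nonzero[OF S] by (auto simp: bot_unique)
  qed
qed

lemma exists_independent_card:
  assumes "infinite (UNIV :: 'a::boolean_algebra set)"
  shows "\<exists>Y :: 'a set. independent Y \<and> finite Y \<and> card Y = n"
proof -
  have "infinite {x :: 'a. x \<le> top}" using assms by simp
  then obtain a :: "nat set \<Rightarrow> 'a" where
    a: "\<forall>S\<in>Pow {..<n}. a S \<noteq> bot \<and> a S \<le> top"
      "\<forall>S\<in>Pow {..<n}. \<forall>T\<in>Pow {..<n}. S \<noteq> T \<longrightarrow> inf (a S) (a T) = bot"
    using exists_disjoint_family[of "Pow {..<n}"] by blast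
  let ?y = "\<lambda>j. Sup_fin (a ` {S. S \<subseteq> {..<n} \<and> j \<in> S})"
  have "inj_on ?y {..<n}" "independent (?y ` {..<n})"
    using a by (intro independent_joins_of_disjoint_family; simp)+
  then show ?thesis by (intro exI[of _ "?y ` {..<n}"]) (simp add: card_image)
qed

lemma infinite_Ind_set:
  assumes "infinite (UNIV :: 'a::boolean_algebra set)"
  shows "infinite (Ind_set TYPE('a))"
proof
  assume fin: "finite (Ind_set TYPE('a))"
  obtain Y :: "'a set" where Y: "independent Y" "finite Y" "card Y = Suc (card (Ind_set TYPE('a)))"
    using exists_independent_card[OF assms] by blast
  obtain h where "inj_on h Y" "h ` Y \<subseteq> Ind_set TYPE('a)"
    using card_of_independent_le_Ind[OF Y(1)] unfolding card_of_ordLeq[symmetric] by blast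
  then have "card Y \<le> card (Ind_set TYPE('a))" using fin by (rule card_inj_on_le)
  then show False using Y(3) by simp
qed

definition closure_step :: "'k rel \<Rightarrow> ('a::boolean_algebra \<Rightarrow> 'a set) \<Rightarrow> 'a set \<Rightarrow> 'a set" where
  "closure_step \<kappa> f X = insert top (case_prod inf ` (X \<times> X) \<union> uminus ` X \<union> \<Union>(f ` X) \<union>
     (\<Union>(D, U) \<in> small_subsets \<kappa> X \<times> small_subsets \<kappa> X. Domain (max_gap_family D U)))"

lemma mono_closure_step: "mono (closure_step \<kappa> f)"
proof (rule monoI)
  fix X Y :: "'a set" assume "X \<subseteq> Y"
  then have "small_subsets \<kappa> X \<subseteq> small_subsets \<kappa> Y" unfolding small_subsets_def by blast
  with \<open>X \<subseteq> Y\<close> show "closure_step \<kappa> f X \<subseteq> closure_step \<kappa> f Y"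
    unfolding closure_step_def by blast
qed

lemma card_of_closure_step_le:
  fixes X :: "'a::boolean_algebra set" and W :: "'w set"
  assumes W: "\<not> finite W" and X: "|X| \<le>o |W|" and small: "|small_subsets \<kappa> X| \<le>o |W|"
    and f: "\<And>x. |f x| \<le>o |W|" and gap: "\<And>D U :: 'a set. |Domain (max_gap_family D U)| \<le>o |W|"
  shows "|closure_step \<kappa> f X| \<le>o |W|"
proof -
  have un: "|A \<union> B| \<le>o |W|" if "|A| \<le>o |W|" "|B| \<le>o |W|" for A B :: "'a set"
    using card_of_Un_ordLeq_infinite_Field[of "|W|" A B] W that card_of_card_order_on[of W]
    by (simp add: Field_card_of)
  have XX: "|X \<times> X| \<le>o |W|" by (rule card_of_Sigma_ordLeq_infinite[OF W X]) (use X in blast)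
  have "|small_subsets \<kappa> X \<times> small_subsets \<kappa> X| \<le>o |W|"
    by (rule card_of_Sigma_ordLeq_infinite[OF W small]) (use small in blast)
  then have "|\<Union>(D, U) \<in> small_subsets \<kappa> X \<times> small_subsets \<kappa> X. Domain (max_gap_family D U)| \<le>o |W|"
    using gap by (intro card_of_UNION_ordLeq_infinite[OF W]) (auto split: prod.split)
  moreover have "|\<Union>(f ` X)| \<le>o |W|" using X f by (intro card_of_UNION_ordLeq_infinite[OF W]) auto
  moreover have "|case_prod inf ` (X \<times> X)| \<le>o |W|" by (rule ordLeq_transitive[OF card_of_image XX])
  moreover have "|uminus ` X| \<le>o |W|" by (rule ordLeq_transitive[OF card_of_image X])
  ultimately have "|case_prod inf ` (X \<times> X) \<union> uminus ` X \<union> \<Union>(f ` X) \<union>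
      (\<Union>(D, U) \<in> small_subsets \<kappa> X \<times> small_subsets \<kappa> X. Domain (max_gap_family D U))| \<le>o |W|"
    by (intro un)
  moreover have "|{top :: 'a}| \<le>o |W|" using W by (intro card_of_singl_ordLeq) auto
  ultimately show ?thesis unfolding closure_step_def using un by (metis insert_is_Un)
qed

lemma closure_step_subsets:
  "top \<in> closure_step \<kappa> f X"
  "x \<in> X \<Longrightarrow> y \<in> X \<Longrightarrow> inf x y \<in> closure_step \<kappa> f X"
  "x \<in> X \<Longrightarrow> - x \<in> closure_step \<kappa> f X"
  "x \<in> X \<Longrightarrow> f x \<subseteq> closure_step \<kappa> f X"
  "D \<in> small_subsets \<kappa> X \<Longrightarrow> U \<in> small_subsets \<kappa> X \<Longrightarrow>
     Domain (max_gap_family D U) \<subseteq> closure_step \<kappa> f X"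
  unfolding closure_step_def by (auto intro: rev_image_eqI[of "(x, y)"])

lemma closure_step_closed_eq_UNIV:
  fixes A :: "'a::boolean_algebra set" and \<kappa> :: "'k rel"
  assumes \<kappa>: "Card_order \<kappa>" "cinfinite \<kappa>"
    and FN: "\<And>a b. a \<le> b \<Longrightarrow> \<exists>c\<in>f a \<inter> f b. a \<le> c \<and> c \<le> b" and f_small: "\<And>a. |f a| <o \<kappa>"
    and closed: "\<And>X. X \<subseteq> A \<Longrightarrow> |X| <o \<kappa> \<Longrightarrow> closure_step \<kappa> f X \<subseteq> A"
  shows "A = UNIV"
proof (rule FN_closed_eq_UNIV[OF FN f_small])
  have step: "closure_step \<kappa> f X \<subseteq> A" if "X \<subseteq> A" "finite X" for X
    using that by (intro closed finite_card_of_ordLess[OF \<kappa>])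
  show "gen_subalgebra A \<subseteq> A"
  proof (rule gen_subalgebra_least)
    show "top \<in> A" using step[of "{}"] closure_step_subsets(1) by blast
    show "inf x y \<in> A" if "x \<in> A" "y \<in> A" for x y
      using that step[of "{x, y}"] closure_step_subsets(2)[of x "{x, y}" y] by blast
    show "- x \<in> A" if "x \<in> A" for x
      using that step[of "{x}"] closure_step_subsets(3)[of x "{x}"] by blast
  qed simp
  show "f a \<subseteq> A" if "a \<in> A" for a
    using that step[of "{a}"] closure_step_subsets(4)[of a "{a}"] by blast
  fix D U assume DU: "D \<subseteq> A" "U \<subseteq> A" "|D| <o \<kappa>" "|U| <o \<kappa>"
  have "|D \<union> U| <o \<kappa>"
    using DU \<kappa> by (intro card_of_Un_ordLess_infinite_Field) (auto simp: cinfinite_def)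
  then have "closure_step \<kappa> f (D \<union> U) \<subseteq> A" using DU by (intro closed) auto
  moreover have "D \<in> small_subsets \<kappa> (D \<union> U)" "U \<in> small_subsets \<kappa> (D \<union> U)"
    using DU by (auto simp: small_subsets_def)
  ultimately show "Domain (max_gap_family D U) \<subseteq> A" using closure_step_subsets(5) by blast
qed

theorem card_le_small_funcs_if_FN:
  fixes \<kappa> :: "'k rel" and L :: "'l set"
  assumes \<kappa>: "Card_order \<kappa>" "cinfinite \<kappa>" "regularCard \<kappa>" and FN: "kappa_FN \<kappa> TYPE('a::boolean_algebra)"
    and Ind: "\<And>Y :: 'a set. independent Y \<Longrightarrow> |Y| \<le>o |L|" and "l0 \<in> L" and "top \<noteq> (bot :: 'a)"
  shows "|UNIV :: 'a set| \<le>o |small_funcs \<kappa> (Field \<kappa>) L|"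
proof -
  obtain f :: "'a \<Rightarrow> 'a set" where f_small: "\<And>a. |f a| <o \<kappa>"
    and f_FN: "\<And>a b. a \<le> b \<Longrightarrow> \<exists>c\<in>f a \<inter> f b. a \<le> c \<and> c \<le> b"
    using FN unfolding kappa_FN_def by blast
  let ?W = "small_funcs \<kappa> (Field \<kappa>) L"
  have Field_ne: "Field \<kappa> \<noteq> {}" and L_ne: "L \<noteq> {}"
    using \<kappa>(2) \<open>l0 \<in> L\<close> by (auto simp: cinfinite_def)
  have Field_W: "|Field \<kappa>| \<le>o |?W|"
    using card_of_Times1[OF L_ne] card_of_Times_le_small_funcs[OF \<kappa>(1,2)] by (rule ordLeq_transitive)
  have L_W: "|L| \<le>o |?W|"
    using card_of_Times2[OF Field_ne] card_of_Times_le_small_funcs[OF \<kappa>(1,2)] by (rule ordLeq_transitive)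
  have W_inf: "\<not> finite ?W" using Field_W \<kappa>(2) card_of_ordLeq_finite unfolding cinfinite_def by blast
  have small_W: "|X| \<le>o |?W|" if "|X| <o \<kappa>" for X :: "'x set"
    using ordLess_imp_ordLeq[OF ordLess_ordIso_trans[OF that ordIso_symmetric[OF card_of_Field_ordIso[OF \<kappa>(1)]]]]
      Field_W by (rule ordLeq_transitive)
  have "|closure_step \<kappa> f X| \<le>o |?W|" if "|X| \<le>o |?W|" for X
  proof (rule card_of_closure_step_le[OF W_inf that])
    show "|small_subsets \<kappa> X| \<le>o |?W|" by (rule card_of_small_subsets_le[OF \<kappa> \<open>l0 \<in> L\<close> that])
    show "|f x| \<le>o |?W|" for x by (rule small_W[OF f_small])
    show "|Domain (max_gap_family D U)| \<le>o |?W|" for D U :: "'a set"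
      using Ind[OF independent_Domain_gap_family[OF max_gap_family(1) \<open>top \<noteq> bot\<close>]] L_W
      by (rule ordLeq_transitive)
  qed
  then obtain A where A: "|A| \<le>o |?W|" "\<And>X. X \<subseteq> A \<Longrightarrow> |X| <o \<kappa> \<Longrightarrow> closure_step \<kappa> f X \<subseteq> A"
    using exists_small_closed_set[OF \<kappa> mono_closure_step Field_W] by blast
  have "A = UNIV" using \<kappa>(1,2) f_FN f_small A(2) by (rule closure_step_closed_eq_UNIV)
  with A(1) show ?thesis by simp
qed

theorem card_le_cpow_less_Ind:
  fixes \<kappa> :: "'k rel"
  assumes "infinite (UNIV :: 'a::boolean_algebra set)"
    and \<kappa>: "Card_order \<kappa>" "cinfinite \<kappa>" "regularCard \<kappa>" and FN: "kappa_FN \<kappa> TYPE('a)"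
  shows "|UNIV :: 'a set| \<le>o |cpow_less (Ind_set TYPE('a)) \<kappa>|"
proof -
  let ?L = "Ind_set TYPE('a)"
  have L_inf: "infinite ?L" by (rule infinite_Ind_set[OF assms(1)])
  then obtain l0 where "l0 \<in> ?L" by (metis finite.emptyI ex_in_conv)
  have "|UNIV :: 'a set| \<le>o |small_funcs \<kappa> (Field \<kappa>) ?L|"
    using \<kappa> FN card_of_independent_le_Ind \<open>l0 \<in> ?L\<close> top_ne_bot_if_infinite[OF assms(1)]
    by (rule card_le_small_funcs_if_FN)
  also have "|small_funcs \<kappa> (Field \<kappa>) ?L| \<le>o |cpow_less ?L \<kappa>|"
    by (rule card_of_small_funcs_le_cpow_less[OF \<kappa> card_of_UNIV_bool_le_infinite[OF L_inf]])
  finally show ?thesis .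
qed

theorem corollary4p3:
  fixes \<kappa> :: "'k rel"
  assumes "infinite (UNIV :: 'a::boolean_algebra set)"
  shows "(Card_order \<kappa> \<and> cinfinite \<kappa> \<and> regularCard \<kappa> \<and> kappa_FN \<kappa> TYPE('a)
            \<longrightarrow> |UNIV :: 'a set| \<le>o |cpow_less (Ind_set TYPE('a)) \<kappa>| )
       \<and> (kappa_FN (cardSuc natLeq) TYPE('a)
            \<longrightarrow> |UNIV :: 'a set| \<le>o |Func (UNIV :: nat set) (Ind_set TYPE('a))| )"
proof (intro conjI impI)
  show "|UNIV :: 'a set| \<le>o |cpow_less (Ind_set TYPE('a)) \<kappa>|"
    if "Card_order \<kappa> \<and> cinfinite \<kappa> \<and> regularCard \<kappa> \<and> kappa_FN \<kappa> TYPE('a)"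
    using assms that card_le_cpow_less_Ind by blast
next
  assume FN: "kappa_FN (cardSuc natLeq) TYPE('a)"
  have "|UNIV :: 'a set| \<le>o |cpow_less (Ind_set TYPE('a)) (cardSuc natLeq)|"
    using assms cardSuc_Card_order Cinfinite_cardSuc regularCard_cardSuc natLeq_Cinfinite FN
    by (intro card_le_cpow_less_Ind) auto
  also have "|cpow_less (Ind_set TYPE('a)) (cardSuc natLeq)| \<le>o |Func (UNIV :: nat set) (Ind_set TYPE('a))|"
    using infinite_Ind_set[OF assms] by (intro card_of_cpow_less_cardSuc_natLeq) auto
  finally show "|UNIV :: 'a set| \<le>o |Func (UNIV :: nat set) (Ind_set TYPE('a))|" .
qed

end
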